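(* Let $k\ge3$ and $r\ge1$ be integers. Let $\mathcal{C}$ be a multiset of $2^k+r$ non-zero residues modulo $2^{k+1}$ such that no sub-collection sums to $2^k$ modulo $2^{k+1}$, and such that for no odd $\lambda$ can the multiset $\lambda\cdot\mathcal{C}$ be type 1 compressed. Then either $\mathcal{C}$ contains at least $2^{k-1}+r$ even residues, or there is an odd residue $t$ modulo $2^{k+1}$ such that $\mathcal{C}$ contains at least $2^{k-1}+r$ elements each lying in $\{t,-t,2^k-t,-(2^k-t)\}$.
   Context: Multisets are called collections. $\lambda\cdot\mathcal{C}=\{\lambda c: c\in\mathcal{C}\}$ (as a multiset). For a residue $t$ modulo $2^{k+1}$, $|t|$ is the minimal absolute value of an integer in its residue class. A multiset $\mathcal{D}$ of residues modulo $2^{k+1}$ can be type 1 compressed if for some $\lambda>0$ it contains at least $\lambda$ elements each equal to $1$ or $-1$ and also an element $t$ with $1<|t|\le\lambda+1$ (the compression replaces $t$ by $|t|$ copies of $1$ if $t\in[1,2^k-1]$ and by $|t|$ copies of $-1$ otherwise). *)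

theory Defs
  imports Main "HOL-Library.Multiset"
begin

text \<open>Residues modulo M are represented by integers, compared via mod M.
  res_abs M t is the minimal absolute value of an integer in the class of t.\<close>
definition res_abs :: "int \<Rightarrow> int \<Rightarrow> int" where
  "res_abs M t = min (t mod M) (M - t mod M)"

definition type1_compressible :: "nat \<Rightarrow> int multiset \<Rightarrow> bool" where
  "type1_compressible k D \<longleftrightarrow>
     (\<exists>lam::nat. lam > 0 \<and>
        lam \<le> size (filter_mset (\<lambda>d. d mod 2^(k+1) = 1 \<or> d mod 2^(k+1) = (-1) mod 2^(k+1)) D) \<and>
        (\<exists>t\<in>#D. 1 < res_abs (2^(k+1)) t \<and> res_abs (2^(k+1)) t \<le> int lam + 1))"

definition scale_res :: "nat \<Rightarrow> int \<Rightarrow> int multiset \<Rightarrow> int multiset" where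
  "scale_res k lam C = image_mset (\<lambda>c. (lam * c) mod 2^(k+1)) C"

end

theory Submission
  imports Defs
begin

text \<open>
  Write S(C) for the set of subset sums of C modulo N = 2^(k+1). Adding x to C replaces S by
  the union of S and S + x, which gains one sum for every point of S whose x-translate leaves S.
  Since 2^k is a multiple of every non-zero residue, there is such a point as long as 2^k is not
  a subset sum, so |S(C)| > |C|.

  Call C mixed if it contains an odd w and an element a not congruent to +-w. For admissible
  mixed C we show |S(C)| >= min(2|C|, N - 1) by induction on |C|. If removing some x leaves an
  unmixed collection P, then P is all even or all congruent to +-t for one odd t, and S(P) and
  S(P) + x are disjoint: by parity, resp. because a common point would give x = i t with
  |i| <= |P|, which makes t^(-1) C type 1 compressible; hence |S(C)| = 2 |S(P)| >= 2 |C|.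
  Otherwise the induction hypothesis applies to every C - x, and we are done unless every
  removal costs at most one sum. Then S(C) has at most one exit in each direction x in C. A
  single exit in the direction of the unit w makes S(C) an arithmetic progression with
  difference w, and in the direction a = j w, j not in {0, 1, -1}, such a progression has two
  exits unless it misses only 2^k, i.e. |S(C)| = N - 1.

  Consequently an admissible collection with more than 2^k elements is not mixed: removing an
  element x other than w and a leaves N - 1 subset sums, which together with x reach 2^k. An
  unmixed collection is all even or lies in the classes of +-t for one odd t, so one of the two
  alternatives of the theorem holds for all of C.
\<close>

section \<open>Subset sums modulo N\<close>

definition subset_sums :: "int \<Rightarrow> int multiset \<Rightarrow> int set" where
  "subset_sums N C = {sum_mset D mod N | D. D \<subseteq># C}"

definition shift_mod :: "int \<Rightarrow> int \<Rightarrow> int set \<Rightarrow> int set" where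
  "shift_mod N a X = (\<lambda>z. (z + a) mod N) ` X"

definition boundary :: "int \<Rightarrow> int \<Rightarrow> int set \<Rightarrow> int set" where
  "boundary N a X = {z \<in> X. (z + a) mod N \<notin> X}"

lemma subset_sums_add_mset:
  "subset_sums N (add_mset y C) = subset_sums N C \<union> shift_mod N y (subset_sums N C)"
proof (intro equalityI subsetI)
  fix s assume "s \<in> subset_sums N (add_mset y C)"
  then obtain D where D: "D \<subseteq># add_mset y C" "s = sum_mset D mod N"
    unfolding subset_sums_def by auto
  show "s \<in> subset_sums N C \<union> shift_mod N y (subset_sums N C)"
  proof (cases "y \<in># D")
    case True
    then obtain D' where D': "D = add_mset y D'" by (metis multi_member_split)
    with D have "D' \<subseteq># C" by simp
    moreover have "s = (sum_mset D' mod N + y) mod N"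
      using D D' by (simp add: mod_add_right_eq add.commute)
    ultimately show ?thesis unfolding subset_sums_def shift_mod_def by blast
  next
    case False
    with D(1) have "D \<subseteq># C"
      unfolding subseteq_mset_def by (metis count_add_mset count_eq_zero_iff le_SucE zero_le)
    then show ?thesis using D unfolding subset_sums_def by blast
  qed
next
  fix s assume "s \<in> subset_sums N C \<union> shift_mod N y (subset_sums N C)"
  then show "s \<in> subset_sums N (add_mset y C)"
  proof
    assume "s \<in> subset_sums N C"
    then obtain D where "D \<subseteq># C" "s = sum_mset D mod N" unfolding subset_sums_def by blast
    moreover from this(1) have "D \<subseteq># add_mset y C"
      unfolding subseteq_mset_def by (simp add: le_SucI)
    ultimately show ?thesis unfolding subset_sums_def by blast
  next
    assume "s \<in> shift_mod N y (subset_sums N C)"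
    then obtain D where "D \<subseteq># C" "s = (sum_mset D mod N + y) mod N"
      unfolding shift_mod_def subset_sums_def by blast
    then have "add_mset y D \<subseteq># add_mset y C" "s = sum_mset (add_mset y D) mod N"
      by (simp_all add: mod_add_right_eq add.commute)
    then show ?thesis unfolding subset_sums_def by blast
  qed
qed

lemma subset_sums_subset: "N > 0 \<Longrightarrow> subset_sums N C \<subseteq> {0..<N}"
  unfolding subset_sums_def by auto

lemma zero_in_subset_sums: "0 \<in> subset_sums N C"
  unfolding subset_sums_def by (rule CollectI, rule exI[of _ "{#}"]) simp

lemma elem_mod_in_subset_sums: "x \<in># C \<Longrightarrow> x mod N \<in> subset_sums N C"
  unfolding subset_sums_def by (rule CollectI, rule exI[of _ "{#x#}"]) simp

lemma subset_sums_mono: "C' \<subseteq># C \<Longrightarrow> subset_sums N C' \<subseteq> subset_sums N C"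
  unfolding subset_sums_def using subset_mset.order_trans by blast

lemma inj_on_add_mod: "inj_on (\<lambda>z. (z + a) mod N) {0..<N :: int}"
proof (rule inj_onI)
  fix x y assume "x \<in> {0..<N}" "y \<in> {0..<N}" "(x + a) mod N = (y + a) mod N"
  then have "x mod N = y mod N" by (metis add_diff_cancel_right' mod_diff_left_eq)
  then show "x = y" using \<open>x \<in> {0..<N}\<close> \<open>y \<in> {0..<N}\<close> by simp
qed

lemma card_union_shift_mod:
  assumes "X \<subseteq> {0..<N}"
  shows "card (X \<union> shift_mod N a X) = card X + card (boundary N a X)"
proof -
  have fin: "finite X" using assms finite_subset by blast
  have "inj_on (\<lambda>z. (z + a) mod N) (boundary N a X)"
    by (rule inj_on_subset[OF inj_on_add_mod]) (use assms in \<open>auto simp: boundary_def\<close>)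
  moreover have "shift_mod N a X - X = (\<lambda>z. (z + a) mod N) ` boundary N a X"
    unfolding shift_mod_def boundary_def by blast
  ultimately have "card (shift_mod N a X - X) = card (boundary N a X)"
    by (simp add: card_image)
  moreover have "card (X \<union> shift_mod N a X) = card X + card (shift_mod N a X - X)"
    using card_Un_disjoint[of X "shift_mod N a X - X"] fin by (simp add: shift_mod_def)
  ultimately show ?thesis by simp
qed

lemma card_boundary_union_shift_mod_le:
  assumes "X \<subseteq> {0..<N}"
  shows "card (boundary N a (X \<union> shift_mod N a X)) \<le> card (boundary N a X)"
proof -
  have "finite (boundary N a X)"
    using assms finite_subset unfolding boundary_def by fastforce
  moreover have "boundary N a (X \<union> shift_mod N a X) \<subseteq> (\<lambda>z. (z + a) mod N) ` boundary N a X"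
    unfolding boundary_def shift_mod_def by blast
  ultimately show ?thesis
    by (meson card_image_le card_mono finite_imageI le_trans)
qed

lemma even_mod_iff: "even (N::int) \<Longrightarrow> even (a mod N) \<longleftrightarrow> even a"
  by (simp add: dvd_mod_iff)

lemma subset_sums_disjoint_shift_odd:
  fixes N x :: int
  assumes "even N" "\<forall>c\<in>#P. even c" "odd x"
  shows "subset_sums N P \<inter> shift_mod N x (subset_sums N P) = {}"
proof -
  have "even s" if s: "s \<in> subset_sums N P" for s
  proof -
    obtain D where "D \<subseteq># P" "s = sum_mset D mod N" using s unfolding subset_sums_def by blast
    moreover have "even (sum_mset D)" if "\<forall>c\<in>#D. even c" for D :: "int multiset"
      using that by (induction D) auto
    ultimately show ?thesis using assms(1,2) even_mod_iff by (metis mset_subset_eqD)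
  qed
  moreover have "odd ((s + x) mod N)" if "even s" for s
    using that assms(3) even_mod_iff[OF assms(1)] by simp
  ultimately show ?thesis unfolding shift_mod_def by blast
qed

section \<open>The element of order two\<close>

lemma multiple_eq_half_mod_pow2:
  fixes a :: int
  assumes "a mod 2^(k+1) \<noteq> 0"
  shows "\<exists>m::nat. (int m * a) mod 2^(k+1) = 2^k"
  using assms
proof (induction k arbitrary: a)
  case 0
  then show ?case by (intro exI[of _ 1]) (simp add: odd_iff_mod_2_eq_one)
next
  case (Suc k)
  show ?case
  proof (cases "odd a")
    case True
    then obtain b where "a = 2 * b + 1" by (rule oddE)
    then have "int (2^Suc k) * a = 2^(Suc k + 1) * b + 2^Suc k" by (simp add: algebra_simps)
    then show ?thesis by (intro exI[of _ "2^Suc k"]) simp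
  next
    case False
    then obtain b where b: "a = 2 * b" by auto
    then have "b mod 2^(k+1) \<noteq> 0" using Suc.prems mod_mult_mult1[of 2 b "2^(k+1)"] by auto
    then obtain m where "(int m * b) mod 2^(k+1) = 2^k" using Suc.IH by blast
    then have "(int m * a) mod 2^(Suc k + 1) = 2^Suc k"
      using b mod_mult_mult1[of 2 "int m * b" "2^(k+1)"] by (simp add: algebra_simps)
    then show ?thesis by blast
  qed
qed

lemma boundary_nonempty_of_half_notin:
  fixes a :: int
  assumes "0 \<in> X" "2^k \<notin> X" "a mod 2^(k+1) \<noteq> 0"
  shows "boundary (2^(k+1)) a X \<noteq> {}"
proof
  assume "boundary (2^(k+1)) a X = {}"
  then have closed: "(z + a) mod 2^(k+1) \<in> X" if "z \<in> X" for z
    using that unfolding boundary_def by blast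
  have "(int m * a) mod 2^(k+1) \<in> X" for m :: nat
  proof (induction m)
    case 0
    then show ?case using assms(1) by simp
  next
    case (Suc m)
    have "((int m * a) mod 2^(k+1) + a) mod 2^(k+1) = (int (Suc m) * a) mod 2^(k+1)"
      by (metis add.commute mod_add_left_eq of_nat_Suc distrib_right mult_1)
    then show ?case using closed[OF Suc.IH] by simp
  qed
  then show False using multiple_eq_half_mod_pow2[OF assms(3)] assms(2) by metis
qed

lemma size_less_card_subset_sums:
  assumes "2^k \<notin> subset_sums (2^(k+1)) C" "\<forall>c\<in>#C. c mod 2^(k+1) \<noteq> 0"
  shows "size C < card (subset_sums (2^(k+1)) C)"
  using assms
proof (induction C)
  case empty
  have "subset_sums (2^(k+1)) {#} = {0}" unfolding subset_sums_def by auto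
  then show ?case by simp
next
  case (add y C)
  let ?X = "subset_sums (2^(k+1)) C"
  have fin: "finite (boundary (2^(k+1)) y ?X)"
    using subset_sums_subset[of "2^(k+1)"] finite_subset unfolding boundary_def by fastforce
  have "2^k \<notin> ?X" using add.prems(1) subset_sums_mono[of C "add_mset y C"] by auto
  then have "boundary (2^(k+1)) y ?X \<noteq> {}" "size C < card ?X"
    using boundary_nonempty_of_half_notin zero_in_subset_sums add by auto
  moreover from fin have "0 < card (boundary (2^(k+1)) y ?X) \<longleftrightarrow> boundary (2^(k+1)) y ?X \<noteq> {}"
    by (simp add: card_gt_0_iff)
  ultimately have "size (add_mset y C) < card ?X + card (boundary (2^(k+1)) y ?X)"
    by simp
  then show ?case
    using card_union_shift_mod[OF subset_sums_subset] by (simp add: subset_sums_add_mset)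
qed

lemma card_subset_sums_add_mset_disjoint:
  assumes "2^k \<notin> subset_sums (2^(k+1)) P" "\<forall>c\<in>#P. c mod 2^(k+1) \<noteq> 0"
    and "subset_sums (2^(k+1)) P \<inter> shift_mod (2^(k+1)) x (subset_sums (2^(k+1)) P) = {}"
  shows "2 * size (add_mset x P) \<le> card (subset_sums (2^(k+1)) (add_mset x P))"
proof -
  let ?X = "subset_sums (2^(k+1)) P"
  have "boundary (2^(k+1)) x ?X = ?X" using assms(3) unfolding boundary_def shift_mod_def by blast
  then have "card (subset_sums (2^(k+1)) (add_mset x P)) = 2 * card ?X"
    using card_union_shift_mod[OF subset_sums_subset] by (simp add: subset_sums_add_mset)
  then show ?thesis using size_less_card_subset_sums[OF assms(1,2)] by simp
qed

lemma half_in_subset_sums_add_mset: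
  fixes x :: int
  assumes "2^(k+1) - 1 \<le> card (subset_sums (2^(k+1)) C)" "x mod 2^(k+1) \<noteq> 0"
  shows "2^k \<in> subset_sums (2^(k+1)) (add_mset x C)"
proof (cases "2^k \<in> subset_sums (2^(k+1)) C")
  case True
  then show ?thesis using subset_sums_mono[of C "add_mset x C"] by auto
next
  case False
  define N :: int where "N = 2^(k+1)"
  have "subset_sums N C \<subseteq> {0..<N} - {2^k}"
    using False subset_sums_subset[of N C] unfolding N_def by auto
  moreover have "card ({0..<N} - {2^k}) = 2^(k+1) - 1"
    unfolding N_def by (simp add: nat_mult_distrib nat_power_eq)
  ultimately have full: "subset_sums N C = {0..<N} - {2^k}"
    using assms(1) unfolding N_def by (intro card_seteq) auto
  have "(2^k - x) mod N \<noteq> 2^k"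
    using assms(2) mod_diff_cong[of "2^k - x" N "2^k" "2^k" "2^k"] unfolding N_def by auto
  moreover have "N > 0" unfolding N_def by simp
  ultimately have "(2^k - x) mod N \<in> subset_sums N C" unfolding full by simp
  moreover have "((2^k - x) mod N + x) mod N = 2^k" unfolding N_def by (simp add: mod_add_left_eq)
  ultimately have "2^k \<in> shift_mod N x (subset_sums N C)" unfolding shift_mod_def by force
  then show ?thesis unfolding N_def by (simp add: subset_sums_add_mset)
qed

section \<open>Sets with a single exit\<close>

lemma bij_betw_affine_mod:
  fixes N w c :: int
  assumes "coprime w N"
  shows "bij_betw (\<lambda>i. (c + i * w) mod N) {0..<N} {0..<N}"
proof -
  have "inj_on (\<lambda>i. (c + i * w) mod N) {0..<N}"
  proof (rule inj_onI)
    fix i j assume ij: "i \<in> {0..<N}" "j \<in> {0..<N}" "(c + i * w) mod N = (c + j * w) mod N"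
    then have "N dvd (i - j) * w" by (simp add: mod_eq_dvd_iff algebra_simps)
    then have "N dvd i - j" using assms by (simp add: coprime_dvd_mult_left_iff coprime_commute)
    then show "i = j" using ij(1,2) by (simp add: mod_eq_dvd_iff[symmetric])
  qed
  moreover have "(\<lambda>i. (c + i * w) mod N) ` {0..<N} \<subseteq> {0..<N}" by auto
  ultimately show ?thesis by (simp add: bij_betw_def endo_inj_surj)
qed

lemma downward_closed_eq_atLeastLessThan:
  fixes Y :: "int set"
  assumes "finite Y" "Y \<subseteq> {0..}" "\<And>i. i \<in> Y \<Longrightarrow> 0 < i \<Longrightarrow> i - 1 \<in> Y"
  shows "Y = {0..<int (card Y)}"
proof (cases "Y = {}")
  case False
  define M where "M = Max Y"
  have "M \<in> Y" using assms(1) False unfolding M_def by simp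
  have "j \<in> Y" if "0 \<le> j" "j \<le> M" for j
    using that(2,1)
  proof (induction j rule: int_le_induct)
    case base
    show ?case by (fact \<open>M \<in> Y\<close>)
  next
    case (step i)
    then show ?case using assms(3) by simp
  qed
  then have "Y = {0..M}" using assms(1,2) unfolding M_def by fastforce
  then show ?thesis using \<open>M \<in> Y\<close> assms(2) by auto
qed simp

lemma card_filter_bij_betw:
  assumes "bij_betw f A A" "X \<subseteq> A"
  shows "card {i \<in> A. f i \<in> X} = card X"
proof -
  have "f ` {i \<in> A. f i \<in> X} = X"
  proof
    show "f ` {i \<in> A. f i \<in> X} \<subseteq> X" by auto
    show "X \<subseteq> f ` {i \<in> A. f i \<in> X}"
    proof
      fix x assume "x \<in> X"
      then obtain i where "i \<in> A" "x = f i"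
        using bij_betw_imp_surj_on[OF assms(1)] assms(2) by blast
      then show "x \<in> f ` {i \<in> A. f i \<in> X}" using \<open>x \<in> X\<close> by blast
    qed
  qed
  then have "bij_betw f {i \<in> A. f i \<in> X} X" by (intro bij_betw_subset[OF assms(1)]) auto
  then show ?thesis by (rule bij_betw_same_card)
qed

lemma progression_of_boundary_singleton:
  fixes N w e :: int
  assumes "coprime w N" "X \<subseteq> {0..<N}" "boundary N w X = {e}"
  shows "(e - m * w) mod N \<in> X \<longleftrightarrow> m mod N < int (card X)"
proof -
  define \<phi> where "\<phi> i = (e + i * (-w)) mod N" for i
  have bij: "bij_betw \<phi> {0..<N} {0..<N}"
    unfolding \<phi>_def using assms(1) by (intro bij_betw_affine_mod) simp
  have "e \<in> X" using assms(3) unfolding boundary_def by blast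
  then have "e \<in> {0..<N}" using assms(2) by blast
  then have \<phi>0: "\<phi> 0 = e" unfolding \<phi>_def by simp
  \<comment> \<open>Walking back from the only exit e in steps of w stays in X until X is exhausted.\<close>
  define Y where "Y = {i \<in> {0..<N}. \<phi> i \<in> X}"
  have step: "i - 1 \<in> Y" if "i \<in> Y" "0 < i" for i
  proof -
    have "\<phi> i \<noteq> e"
      using that bij \<phi>0 \<open>e \<in> {0..<N}\<close> unfolding Y_def bij_betw_def inj_on_def by force
    then have "(\<phi> i + w) mod N \<in> X" using that(1) assms(3) unfolding Y_def boundary_def by blast
    moreover have "(\<phi> i + w) mod N = (e - i * w + w) mod N" unfolding \<phi>_def by (simp add: mod_add_left_eq)
    moreover have "\<dots> = \<phi> (i - 1)" unfolding \<phi>_def by (simp add: algebra_simps)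
    ultimately show ?thesis using that unfolding Y_def by simp
  qed
  have Y_eq: "Y = {0..<int (card Y)}"
  proof (rule downward_closed_eq_atLeastLessThan)
    show "finite Y" unfolding Y_def by (rule finite_subset[of _ "{0..<N}"]) auto
  qed (use step in \<open>auto simp: Y_def\<close>)
  have card_Y: "card Y = card X"
    unfolding Y_def using bij assms(2) by (rule card_filter_bij_betw)
  have "(e - m * w) mod N = \<phi> (m mod N)"
  proof -
    have "(e - m * w) mod N = (e - (m * w) mod N) mod N" by (simp add: mod_diff_right_eq)
    also have "\<dots> = (e - (m mod N * w) mod N) mod N" by (simp add: mod_mult_left_eq)
    finally show ?thesis unfolding \<phi>_def by (simp add: mod_diff_right_eq)
  qed
  moreover have "m mod N \<in> {0..<N}" using \<open>e \<in> {0..<N}\<close> by simp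
  ultimately have "(e - m * w) mod N \<in> X \<longleftrightarrow> m mod N \<in> Y" unfolding Y_def by simp
  also have "\<dots> \<longleftrightarrow> m mod N < int (card X)"
    using \<open>m mod N \<in> {0..<N}\<close> by (subst Y_eq) (simp add: card_Y)
  finally show ?thesis .
qed

lemma two_escaping_indices:
  fixes n j N :: int
  assumes "2 \<le> n" "n \<le> N - 2" "2 \<le> j" "j \<le> N - 2"
  obtains i1 i2 where "i1 \<noteq> i2" "i1 \<in> {0..<n}" "i2 \<in> {0..<n}" "n \<le> (i1 - j) mod N" "n \<le> (i2 - j) mod N"
proof -
  define d where "d = N - j"
  have mod_eq: "(i - j) mod N = i + d" if "0 \<le> i + d" "i + d < N" for i
  proof -
    have "(i - j) mod N = (i + d + (-1) * N) mod N" unfolding d_def by (simp add: algebra_simps)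
    then show ?thesis using that by (simp only: mod_mult_self1) simp
  qed
  consider "n \<le> d" | "d < n" "n + d \<le> N" | "N < n + d" by linarith
  then show ?thesis
  proof cases
    case 1
    then show ?thesis using that[of 0 1] assms mod_eq[of 0] mod_eq[of 1] unfolding d_def by auto
  next
    case 2
    then show ?thesis
      using that[of "n - 1" "n - 2"] assms mod_eq[of "n - 1"] mod_eq[of "n - 2"] unfolding d_def by auto
  next
    case 3
    then show ?thesis
      using that[of "j - 1" "j - 2"] assms mod_eq[of "j - 1"] mod_eq[of "j - 2"] unfolding d_def by auto
  qed
qed

lemma two_le_card_boundary_of_progression:
  fixes N w e a :: int
  assumes "coprime w N" and prog: "\<And>m. (e - m * w) mod N \<in> X \<longleftrightarrow> m mod N < int (card X)"
    and n: "2 \<le> card X" "int (card X) \<le> N - 2"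
    and a: "a mod N \<notin> {0, w mod N, (-w) mod N}"
  shows "2 \<le> card (boundary N a X)"
proof -
  have "a mod N \<in> (\<lambda>i. (0 + i * w) mod N) ` {0..<N}"
    using bij_betw_affine_mod[OF assms(1), of 0] n unfolding bij_betw_def by simp
  then obtain j where j: "j \<in> {0..<N}" "a mod N = (j * w) mod N" by auto
  have "(j * w) mod N \<notin> {0, w mod N, (-w) mod N}" using a j(2) by simp
  moreover have "(j * w) mod N = (-w) mod N" if "j = N - 1"
  proof -
    have "j * w = -w + w * N" using that by (simp add: left_diff_distrib)
    then show ?thesis by (simp only: mod_mult_self1)
  qed
  ultimately have "j \<noteq> 0" "j \<noteq> 1" "j \<noteq> N - 1" by auto
  then have "2 \<le> j" "j \<le> N - 2" using j(1) by auto
  moreover have "2 \<le> int (card X)" using n(1) by simp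
  ultimately obtain i1 i2 where i: "i1 \<noteq> i2" "i1 \<in> {0..<int (card X)}" "i2 \<in> {0..<int (card X)}"
      "int (card X) \<le> (i1 - j) mod N" "int (card X) \<le> (i2 - j) mod N"
    using n(2) two_escaping_indices by blast
  have exit: "(e - i * w) mod N \<in> boundary N a X"
    if "i \<in> {0..<int (card X)}" "int (card X) \<le> (i - j) mod N" for i
  proof -
    have "((e - i * w) mod N + a) mod N = (e - i * w + a mod N) mod N"
      by (simp add: mod_add_left_eq mod_add_right_eq)
    also have "\<dots> = (e - i * w + j * w) mod N"
      unfolding j(2) by (simp add: mod_add_right_eq)
    also have "\<dots> = (e - (i - j) * w) mod N" by (simp add: algebra_simps)
    finally show ?thesis
      using that prog[of i] prog[of "i - j"] n unfolding boundary_def by auto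
  qed
  have "inj_on (\<lambda>i. (e + i * (-w)) mod N) {0..<N}"
    using bij_betw_affine_mod[of "-w" N e] assms(1) by (simp add: bij_betw_def)
  moreover have "i1 \<in> {0..<N}" "i2 \<in> {0..<N}" using i(2,3) n(2) by auto
  ultimately have "(e + i1 * (-w)) mod N \<noteq> (e + i2 * (-w)) mod N"
    using i(1) by (meson inj_onD)
  then have "(e - i1 * w) mod N \<noteq> (e - i2 * w) mod N" by simp
  then have "card {(e - i1 * w) mod N, (e - i2 * w) mod N} = 2" by simp
  moreover have "{(e - i1 * w) mod N, (e - i2 * w) mod N} \<subseteq> boundary N a X"
    using exit i by blast
  moreover have "finite (boundary N a X)"
    using n card.infinite unfolding boundary_def by fastforce
  ultimately show ?thesis by (metis card_mono)
qed

lemma card_eq_of_card_boundary_le_one: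
  fixes w a :: int
  assumes X: "X \<subseteq> {0..<2^(k+1)}" "0 \<in> X" "2^k \<notin> X"
    and w: "odd w" "w mod 2^(k+1) \<in> X" "card (boundary (2^(k+1)) w X) \<le> 1"
    and a: "a mod 2^(k+1) \<notin> {0, w mod 2^(k+1), (-w) mod 2^(k+1)}"
      "card (boundary (2^(k+1)) a X) \<le> 1"
  shows "card X = 2^(k+1) - 1"
proof -
  define N :: int where "N = 2^(k+1)"
  have "coprime w N" unfolding N_def using w(1) by (simp add: coprime_right_2_iff_odd)
  have fin: "finite X" using X(1) finite_subset by blast
  have "w mod N \<noteq> 0" using w(1) even_mod_iff[of N w] unfolding N_def by fastforce
  then have "2 \<le> card X"
    using X(2) w(2) fin unfolding N_def by (metis card_2_iff card_mono empty_subsetI insert_subset)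
  moreover have "card X < card {0..<N}"
    using X unfolding N_def by (intro psubset_card_mono) auto
  then have "int (card X) \<le> N - 1" unfolding N_def by simp
  moreover have "\<not> int (card X) \<le> N - 2"
  proof
    assume "int (card X) \<le> N - 2"
    have "boundary N w X \<noteq> {}"
      using boundary_nonempty_of_half_notin X(2,3) \<open>w mod N \<noteq> 0\<close> unfolding N_def by blast
    moreover have "finite (boundary N w X)" using fin unfolding boundary_def by simp
    ultimately have "card (boundary N w X) = 1"
      using w(3) unfolding N_def by (simp add: le_antisym Suc_le_eq card_gt_0_iff)
    then obtain e where "boundary N w X = {e}" by (rule card_1_singletonE)
    then have "\<And>m. (e - m * w) mod N \<in> X \<longleftrightarrow> m mod N < int (card X)"
      using progression_of_boundary_singleton \<open>coprime w N\<close> X(1) unfolding N_def by blast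
    then have "2 \<le> card (boundary N a X)"
      using two_le_card_boundary_of_progression \<open>coprime w N\<close> \<open>2 \<le> card X\<close>
        \<open>int (card X) \<le> N - 2\<close> a(1) unfolding N_def by blast
    then show False using a(2) unfolding N_def by simp
  qed
  moreover have "int (2^(k+1)) = N" unfolding N_def by simp
  ultimately show ?thesis by linarith
qed

section \<open>Collections of elements congruent to plus or minus t\<close>

definition mixed :: "int \<Rightarrow> int multiset \<Rightarrow> bool" where
  "mixed N C \<longleftrightarrow> (\<exists>w\<in>#C. \<exists>a\<in>#C. odd w \<and> a mod N \<notin> {w mod N, (-w) mod N})"

lemma not_mixed_of_plus_minus:
  fixes N t :: int
  assumes "\<forall>c\<in>#C. c mod N \<in> {t mod N, (-t) mod N}"
  shows "\<not> mixed N C"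
proof
  assume "mixed N C"
  then obtain w a where "w \<in># C" "a \<in># C" "a mod N \<notin> {w mod N, (-w) mod N}"
    unfolding mixed_def by blast
  moreover have "{w mod N, (-w) mod N} = {t mod N, (-t) mod N}"
  proof (cases "w mod N = t mod N")
    case True
    then show ?thesis using mod_minus_cong[of w N t] by simp
  next
    case False
    then have "w mod N = (-t) mod N" using assms \<open>w \<in># C\<close> by blast
    then show ?thesis using mod_minus_cong[of w N "-t"] by auto
  qed
  ultimately show False using assms by blast
qed

lemma sum_mset_mod_of_congruent:
  fixes N s :: int
  assumes "\<forall>c\<in>#D. c mod N = s mod N"
  shows "sum_mset D mod N = (int (size D) * s) mod N"
  using assms
proof (induction D)
  case (add c D)
  have "sum_mset (add_mset c D) mod N = (c mod N + sum_mset D mod N) mod N"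
    by (simp add: mod_add_eq)
  also have "\<dots> = (s mod N + (int (size D) * s) mod N) mod N" using add by simp
  also have "\<dots> = (int (size (add_mset c D)) * s) mod N" by (simp add: mod_add_eq algebra_simps)
  finally show ?case .
qed simp

lemma subset_sum_mod_of_plus_minus:
  fixes N t :: int
  assumes "\<forall>c\<in>#P. c mod N = t mod N \<or> c mod N = (-t) mod N" "D \<subseteq># P"
  shows "sum_mset D mod N =
    ((int (size (filter_mset (\<lambda>c. c mod N = t mod N) D)) - int (size (filter_mset (\<lambda>c. c mod N \<noteq> t mod N) D))) * t) mod N"
proof -
  let ?D1 = "filter_mset (\<lambda>c. c mod N = t mod N) D" and ?D2 = "filter_mset (\<lambda>c. c mod N \<noteq> t mod N) D"
  have "\<forall>c\<in>#?D2. c mod N = (-t) mod N" using assms mset_subset_eqD by fastforce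
  then have D2: "sum_mset ?D2 mod N = (- int (size ?D2) * t) mod N"
    using sum_mset_mod_of_congruent[of ?D2 N "-t"] by simp
  have D1: "sum_mset ?D1 mod N = (int (size ?D1) * t) mod N"
    by (rule sum_mset_mod_of_congruent) simp
  have "sum_mset D = sum_mset ?D1 + sum_mset ?D2"
    by (simp only: sum_mset.union[symmetric] multiset_partition[symmetric])
  then have "sum_mset D mod N = (sum_mset ?D1 mod N + sum_mset ?D2 mod N) mod N"
    by (simp add: mod_add_eq)
  also have "\<dots> = ((int (size ?D1) * t) mod N + (- int (size ?D2) * t) mod N) mod N"
    unfolding D1 D2 ..
  also have "\<dots> = ((int (size ?D1) - int (size ?D2)) * t) mod N"
    by (simp add: mod_add_eq algebra_simps)
  finally show ?thesis .
qed

lemma diff_subset_sums_of_plus_minus: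
  fixes N t :: int
  assumes "\<forall>c\<in>#P. c mod N = t mod N \<or> c mod N = (-t) mod N" "D1 \<subseteq># P" "D2 \<subseteq># P"
  obtains i where "\<bar>i\<bar> \<le> int (size P)" "(sum_mset D1 - sum_mset D2) mod N = (i * t) mod N"
proof -
  let ?p = "\<lambda>D. int (size (filter_mset (\<lambda>c. c mod N = t mod N) D))"
  let ?q = "\<lambda>D. int (size (filter_mset (\<lambda>c. c mod N \<noteq> t mod N) D))"
  define i where "i = (?p D1 - ?q D1) - (?p D2 - ?q D2)"
  have bound: "?p D \<le> ?p P" "?q D \<le> ?q P" if "D \<subseteq># P" for D
    using that by (simp_all add: size_mset_mono multiset_filter_mono)
  have "?p P + ?q P = int (size P)"
    by (simp only: of_nat_add[symmetric] size_union[symmetric] multiset_partition[symmetric])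
  then have "\<bar>i\<bar> \<le> int (size P)"
    using bound[OF assms(2)] bound[OF assms(3)] unfolding i_def abs_le_iff by linarith
  moreover have "(sum_mset D1 - sum_mset D2) mod N = (i * t) mod N"
  proof -
    have "(sum_mset D1 - sum_mset D2) mod N = (sum_mset D1 mod N - sum_mset D2 mod N) mod N"
      by (simp add: mod_diff_eq)
    also have "\<dots> = (((?p D1 - ?q D1) * t) mod N - ((?p D2 - ?q D2) * t) mod N) mod N"
      using subset_sum_mod_of_plus_minus[OF assms(1)] assms(2,3) by simp
    also have "\<dots> = (i * t) mod N" unfolding i_def by (simp add: mod_diff_eq algebra_simps)
    finally show ?thesis .
  qed
  ultimately show ?thesis by (rule that)
qed

lemma res_abs_le_abs:
  assumes "N > 0"
  shows "res_abs N j \<le> \<bar>j\<bar>"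
proof (cases "j \<ge> 0 \<or> j mod N = 0")
  case True
  then show ?thesis using assms zmod_le_nonneg_dividend[of j N] unfolding res_abs_def by auto
next
  case False
  then have "N - j mod N = (-j) mod N" by (simp add: zmod_zminus1_eq_if)
  moreover have "(-j) mod N \<le> -j" using False assms by (simp add: zmod_le_nonneg_dividend)
  ultimately show ?thesis using False unfolding res_abs_def by simp
qed

lemma two_le_res_abs:
  assumes "N > 0" "j mod N \<notin> {0, 1, N - 1}"
  shows "2 \<le> res_abs N j"
  using assms pos_mod_bound[of N j] pos_mod_sign[of N j] unfolding res_abs_def by fastforce

lemma type1_compressible_of_plus_minus:
  fixes l t x :: int
  assumes l: "(l * t) mod 2^(k+1) = 1" and "P \<noteq> {#}"
    and pm: "\<forall>c\<in>#P. c mod 2^(k+1) = t mod 2^(k+1) \<or> c mod 2^(k+1) = (-t) mod 2^(k+1)"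
    and x: "2 \<le> res_abs (2^(k+1)) (l * x)" "res_abs (2^(k+1)) (l * x) \<le> int (size P)"
  shows "type1_compressible k (scale_res k l (add_mset x P))"
proof -
  let ?N = "2^(k+1) :: int"
  let ?unit = "\<lambda>d. d mod ?N = 1 \<or> d mod ?N = (-1) mod ?N"
  have "?unit ((l * c) mod ?N)" if "c \<in># P" for c
  proof -
    have "c mod ?N = t mod ?N \<or> c mod ?N = (-t) mod ?N" using pm that by blast
    then have "(l * c) mod ?N = (l * t) mod ?N \<or> (l * c) mod ?N = (l * (-t)) mod ?N"
      using mod_mult_cong[OF refl, where a = l] by blast
    moreover have "(l * (-t)) mod ?N = (-1) mod ?N"
      using l mod_minus_eq[of "l * t" ?N] by simp
    ultimately show ?thesis using l by auto
  qed
  then have "filter_mset ?unit (image_mset (\<lambda>c. (l * c) mod ?N) P) = image_mset (\<lambda>c. (l * c) mod ?N) P"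
    by (simp add: filter_mset_eq_conv)
  then have "size P \<le> size (filter_mset ?unit (scale_res k l (add_mset x P)))"
    unfolding scale_res_def by simp
  moreover have "(l * x) mod ?N \<in># scale_res k l (add_mset x P)" unfolding scale_res_def by simp
  moreover have "res_abs ?N ((l * x) mod ?N) = res_abs ?N (l * x)" unfolding res_abs_def by simp
  moreover have "0 < size P" using \<open>P \<noteq> {#}\<close> by (simp add: nonempty_has_size)
  ultimately show ?thesis
    unfolding type1_compressible_def using x by (intro exI[of _ "size P"] conjI bexI[of _ "(l * x) mod ?N"]) simp_all
qed

section \<open>Admissible collections\<close>

definition admissible :: "nat \<Rightarrow> int multiset \<Rightarrow> bool" where
  "admissible k C \<longleftrightarrow> (\<forall>c\<in>#C. 0 < c \<and> c < 2^(k+1)) \<and> 2^k \<notin> subset_sums (2^(k+1)) C \<and>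
     (\<forall>lam::int. odd lam \<longrightarrow> \<not> type1_compressible k (scale_res k lam C))"

lemma type1_compressible_mono:
  assumes "D \<subseteq># C" "type1_compressible k (scale_res k lam D)"
  shows "type1_compressible k (scale_res k lam C)"
proof -
  have sub: "scale_res k lam D \<subseteq># scale_res k lam C"
    unfolding scale_res_def using assms(1) by (rule image_mset_subseteq_mono)
  then have "size (filter_mset P (scale_res k lam D)) \<le> size (filter_mset P (scale_res k lam C))" for P
    by (intro size_mset_mono multiset_filter_mono)
  then show ?thesis
    using assms(2) mset_subset_eqD[OF sub] unfolding type1_compressible_def by (meson order_trans)
qed

lemma admissible_subset:
  assumes "admissible k C" "D \<subseteq># C"
  shows "admissible k D"
  using assms subset_sums_mono[OF assms(2)] type1_compressible_mono[OF assms(2)]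
  unfolding admissible_def by (meson mset_subset_eqD subsetD)

lemma subset_sums_disjoint_shift_plus_minus:
  fixes x t :: int
  assumes adm: "admissible k (add_mset x P)" and t: "t \<in># P" "odd t"
    and pm: "\<forall>c\<in>#P. c mod 2^(k+1) = t mod 2^(k+1) \<or> c mod 2^(k+1) = (-t) mod 2^(k+1)"
    and x: "x mod 2^(k+1) \<notin> {t mod 2^(k+1), (-t) mod 2^(k+1)}"
  shows "subset_sums (2^(k+1)) P \<inter> shift_mod (2^(k+1)) x (subset_sums (2^(k+1)) P) = {}"
proof (rule ccontr)
  define N :: int where "N = 2^(k+1)"
  assume "subset_sums (2^(k+1)) P \<inter> shift_mod (2^(k+1)) x (subset_sums (2^(k+1)) P) \<noteq> {}"
  then obtain D1 D2 where D: "D1 \<subseteq># P" "D2 \<subseteq># P"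
    "sum_mset D1 mod N = (sum_mset D2 mod N + x) mod N"
    unfolding subset_sums_def shift_mod_def N_def by blast
  have "\<forall>c\<in>#P. c mod N = t mod N \<or> c mod N = (-t) mod N" using pm unfolding N_def .
  then obtain i where i: "\<bar>i\<bar> \<le> int (size P)" "(sum_mset D1 - sum_mset D2) mod N = (i * t) mod N"
    using D(1,2) by (rule diff_subset_sums_of_plus_minus)
  have "(sum_mset D1 - sum_mset D2) mod N = ((sum_mset D2 + x) - sum_mset D2) mod N"
    using D(3) by (intro mod_diff_cong) (simp_all add: mod_add_left_eq)
  with i(2) have xi: "x mod N = (i * t) mod N" by simp
  have "coprime t N" unfolding N_def using t(2) by simp
  moreover have "1 \<in> {0..<N}" unfolding N_def using one_less_power[of "2::int" "k+1"] by simp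
  ultimately have "1 \<in> (\<lambda>i. (0 + i * t) mod N) ` {0..<N}"
    using bij_betw_affine_mod[of t N 0] by (simp add: bij_betw_def)
  then obtain l where l: "(l * t) mod N = 1" by auto
  then have "odd l" using even_mod_iff[of N "l * t"] unfolding N_def by auto
  have "(l * x) mod N = (l * (i * t)) mod N" using mod_mult_cong[OF refl xi, where a = l] .
  also have "\<dots> = (i * ((l * t) mod N)) mod N" by (simp add: mod_mult_right_eq algebra_simps)
  finally have lx: "(l * x) mod N = i mod N" using l by simp
  have "x mod N = (t * ((l * x) mod N)) mod N"
  proof -
    have "(t * ((l * x) mod N)) mod N = ((l * t) mod N * x) mod N"
      by (simp add: mod_mult_right_eq mod_mult_left_eq algebra_simps)
    then show ?thesis using l by simp
  qed
  moreover have "x mod N \<noteq> 0" using adm unfolding admissible_def N_def by auto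
  moreover have "(t * (N - 1)) mod N = (-t) mod N"
    using mod_mult_self1[of "-t" t N] by (simp add: algebra_simps)
  ultimately have "(l * x) mod N \<notin> {0, 1, N - 1}" using x unfolding N_def by auto
  then have "2 \<le> res_abs N (l * x)" using two_le_res_abs[of N "l * x"] unfolding N_def by simp
  moreover have "res_abs N (l * x) \<le> int (size P)"
    using res_abs_le_abs[of N i] i(1) lx unfolding res_abs_def N_def by simp
  ultimately have "type1_compressible k (scale_res k l (add_mset x P))"
    using type1_compressible_of_plus_minus[OF l[unfolded N_def] _ pm] t(1) unfolding N_def by force
  then show False using adm \<open>odd l\<close> unfolding admissible_def by blast
qed

lemma card_subset_sums_add_mset_unmixed:
  assumes adm: "admissible k (add_mset x P)"
    and "mixed (2^(k+1)) (add_mset x P)" "\<not> mixed (2^(k+1)) P"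
  shows "2 * size (add_mset x P) \<le> card (subset_sums (2^(k+1)) (add_mset x P))"
proof -
  have "admissible k P" using adm by (rule admissible_subset) simp
  then have P: "2^k \<notin> subset_sums (2^(k+1)) P" "\<forall>c\<in>#P. c mod 2^(k+1) \<noteq> 0"
    unfolding admissible_def by (auto simp: zdvd_not_zless)
  have "subset_sums (2^(k+1)) P \<inter> shift_mod (2^(k+1)) x (subset_sums (2^(k+1)) P) = {}"
  proof (cases "\<forall>c\<in>#P. even c")
    case True
    then have "odd x" using assms(2) unfolding mixed_def by auto
    with True show ?thesis by (intro subset_sums_disjoint_shift_odd) simp_all
  next
    case False
    then obtain t where t: "t \<in># P" "odd t" by blast
    then have pm: "\<forall>c\<in>#P. c mod 2^(k+1) \<in> {t mod 2^(k+1), (-t) mod 2^(k+1)}"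
      using assms(3) unfolding mixed_def by blast
    then have "x mod 2^(k+1) \<notin> {t mod 2^(k+1), (-t) mod 2^(k+1)}"
      using assms(2) not_mixed_of_plus_minus[of "add_mset x P" "2^(k+1)" t] by auto
    with adm t pm show ?thesis by (intro subset_sums_disjoint_shift_plus_minus) auto
  qed
  with P show ?thesis by (rule card_subset_sums_add_mset_disjoint)
qed

lemma card_subset_sums_slow_growth:
  assumes adm: "admissible k C" and "mixed (2^(k+1)) C"
    and slow: "\<forall>x\<in>#C. card (subset_sums (2^(k+1)) C) \<le> card (subset_sums (2^(k+1)) (C - {#x#})) + 1"
  shows "card (subset_sums (2^(k+1)) C) = 2^(k+1) - 1"
proof -
  let ?S = "subset_sums (2^(k+1))"
  have "card (boundary (2^(k+1)) x (?S C)) \<le> 1" if "x \<in># C" for x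
  proof -
    have C: "C = add_mset x (C - {#x#})" using that by simp
    have X: "?S (C - {#x#}) \<subseteq> {0..<2^(k+1)}" by (simp add: subset_sums_subset)
    have "card (?S C) = card (?S (C - {#x#})) + card (boundary (2^(k+1)) x (?S (C - {#x#})))"
      using card_union_shift_mod[OF X] by (subst C) (simp add: subset_sums_add_mset)
    moreover have "card (boundary (2^(k+1)) x (?S C)) \<le> card (boundary (2^(k+1)) x (?S (C - {#x#})))"
      using card_boundary_union_shift_mod_le[OF X] by (subst C) (simp add: subset_sums_add_mset)
    ultimately show ?thesis using bspec[OF slow that] by linarith
  qed
  moreover obtain w a where "w \<in># C" "a \<in># C" "odd w" "a mod 2^(k+1) \<notin> {w mod 2^(k+1), (-w) mod 2^(k+1)}"
    using assms(2) unfolding mixed_def by blast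
  moreover have "a mod 2^(k+1) \<noteq> 0" "2^k \<notin> ?S C"
    using adm \<open>a \<in># C\<close> unfolding admissible_def by (auto simp: zdvd_not_zless)
  ultimately show ?thesis
    using card_eq_of_card_boundary_le_one[OF subset_sums_subset zero_in_subset_sums]
      elem_mod_in_subset_sums by simp
qed

lemma card_subset_sums_mixed:
  assumes "admissible k C" "mixed (2^(k+1)) C"
  shows "min (2 * size C) (2^(k+1) - 1) \<le> card (subset_sums (2^(k+1)) C)"
  using assms
proof (induction "size C" arbitrary: C rule: less_induct)
  case less
  let ?S = "subset_sums (2^(k+1))"
  show ?case
  proof (cases "\<exists>x\<in>#C. \<not> mixed (2^(k+1)) (C - {#x#})")
    case True
    then obtain x where "x \<in># C" "\<not> mixed (2^(k+1)) (C - {#x#})" by blast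
    then show ?thesis
      using card_subset_sums_add_mset_unmixed[of k x "C - {#x#}"] less.prems by simp
  next
    case unmixed: False
    show ?thesis
    proof (cases "\<exists>x\<in>#C. card (?S (C - {#x#})) + 2 \<le> card (?S C)")
      case True
      then obtain x where x: "x \<in># C" "card (?S (C - {#x#})) + 2 \<le> card (?S C)" by blast
      then have "min (2 * size (C - {#x#})) (2^(k+1) - 1) \<le> card (?S (C - {#x#}))"
        using less unmixed admissible_subset[of k C "C - {#x#}"] by (simp add: size_Diff1_less)
      moreover have "size C = size (add_mset x (C - {#x#}))" using x(1) by simp
      then have "size C = size (C - {#x#}) + 1" by simp
      ultimately show ?thesis using x(2) by linarith
    next
      case False
      then have "card (?S C) = 2^(k+1) - 1"
        using card_subset_sums_slow_growth less.prems by fastforce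
      then show ?thesis by simp
    qed
  qed
qed

lemma size_le_of_admissible_mixed:
  assumes "1 \<le> k" "admissible k C" "mixed (2^(k+1)) C"
  shows "size C \<le> 2^k"
proof (rule ccontr)
  assume "\<not> size C \<le> 2^k"
  obtain w a where wa: "w \<in># C" "a \<in># C" "odd w" "a mod 2^(k+1) \<notin> {w mod 2^(k+1), (-w) mod 2^(k+1)}"
    using assms(3) unfolding mixed_def by blast
  then have "a \<noteq> w" by auto
  then obtain R where R: "C = add_mset w (add_mset a R)"
    using wa(1,2) by (metis insert_DiffM insert_noteq_member)
  moreover have "(2::nat) ^ 1 \<le> 2^k" using assms(1) by (rule power_increasing) simp
  ultimately have "R \<noteq> {#}" using \<open>\<not> size C \<le> 2^k\<close> by auto
  then obtain x where "x \<in># R" by blast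
  define C' where "C' = add_mset w (add_mset a (R - {#x#}))"
  have C: "C = add_mset x C'" unfolding C'_def using R \<open>x \<in># R\<close> by simp
  have "admissible k C'" using assms(2) unfolding C by (rule admissible_subset) simp
  moreover have "mixed (2^(k+1)) C'" using wa unfolding mixed_def C'_def by auto
  ultimately have "min (2 * size C') (2^(k+1) - 1) \<le> card (subset_sums (2^(k+1)) C')"
    by (rule card_subset_sums_mixed)
  moreover have "2^(k+1) - 1 \<le> 2 * size C'" using \<open>\<not> size C \<le> 2^k\<close> unfolding C by simp
  moreover have "x mod 2^(k+1) \<noteq> 0"
    using assms(2) unfolding C admissible_def by (auto simp: zdvd_not_zless)
  ultimately have "2^k \<in> subset_sums (2^(k+1)) C" unfolding C by (intro half_in_subset_sums_add_mset) auto
  then show False using assms(2) unfolding admissible_def by blast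
qed

theorem lemma3p6:
  fixes k r :: nat and C :: "int multiset"
  assumes "k \<ge> 3" and "r \<ge> 1"
    and "size C = 2^k + r"
    and "\<forall>c\<in>#C. 0 < c \<and> c < 2^(k+1)"
    and "\<forall>D. D \<subseteq># C \<longrightarrow> sum_mset D mod 2^(k+1) \<noteq> 2^k"
    and "\<forall>lam::int. odd lam \<longrightarrow> \<not> type1_compressible k (scale_res k lam C)"
  shows "2^(k-1) + r \<le> size (filter_mset even C) \<or>
    (\<exists>t::int. odd t \<and>
       2^(k-1) + r \<le> size (filter_mset (\<lambda>c. c mod 2^(k+1) \<in>
          {t mod 2^(k+1), (-t) mod 2^(k+1), (2^k - t) mod 2^(k+1), (-(2^k - t)) mod 2^(k+1)}) C))"
proof -
  have "admissible k C"
    using assms(4-6) unfolding admissible_def subset_sums_def by auto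
  then have "\<not> mixed (2^(k+1)) C"
    using size_le_of_admissible_mixed[of k C] assms(1,2,3) by auto
  have "2^(k-1) + r \<le> size C" using assms(3) by (simp add: power_increasing)
  show ?thesis
  proof (cases "\<forall>c\<in>#C. even c")
    case True
    then have "filter_mset even C = C" by (simp add: filter_mset_eq_conv)
    then show ?thesis using \<open>2^(k-1) + r \<le> size C\<close> by simp
  next
    case False
    then obtain t where "t \<in># C" "odd t" by blast
    then have "\<forall>c\<in>#C. c mod 2^(k+1) \<in> {t mod 2^(k+1), (-t) mod 2^(k+1)}"
      using \<open>\<not> mixed (2^(k+1)) C\<close> unfolding mixed_def by blast
    then have "filter_mset (\<lambda>c. c mod 2^(k+1) \<in>
        {t mod 2^(k+1), (-t) mod 2^(k+1), (2^k - t) mod 2^(k+1), (-(2^k - t)) mod 2^(k+1)}) C = C"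
      by (auto simp: filter_mset_eq_conv)
    then show ?thesis using \<open>odd t\<close> \<open>2^(k-1) + r \<le> size C\<close> by auto
  qed
qed

end
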